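(* For $g\ge0$, let $N_2(g)$ denote the number of gapsets of genus $g$ and depth at most $2$. Then for all $g\ge 2$, $$N_2(g)=N_2(g-1)+N_2(g-2).$$
   Context: A gapset is a finite set $G \subset \mathbb{N}_+=\{1,2,3,\dots\}$ such that for all $z \in G$, whenever $z=x+y$ with $x,y\in\mathbb{N}_+$, we have $x\in G$ or $y\in G$. The multiplicity of $G$ is the least $m\ge 1$ with $m\notin G$; its conductor is $c=\max G+1$ ($c=0$ if $G=\emptyset$); its genus is $|G|$; its depth is $\lceil c/m\rceil$. *)

theory Defs
  imports Main
begin

definition gapset :: "nat set \<Rightarrow> bool" where
  "gapset G \<longleftrightarrow> finite G \<and> 0 \<notin> G \<and>
     (\<forall>z\<in>G. \<forall>x y. x \<ge> 1 \<and> y \<ge> 1 \<and> z = x + y \<longrightarrow> x \<in> G \<or> y \<in> G)"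

definition multiplicity :: "nat set \<Rightarrow> nat" where
  "multiplicity G = (LEAST m. m \<ge> 1 \<and> m \<notin> G)"

definition conductor :: "nat set \<Rightarrow> nat" where
  "conductor G = (if G = {} then 0 else Max G + 1)"

definition genus :: "nat set \<Rightarrow> nat" where
  "genus G = card G"

(* depth = ceiling (c / m), computed with nat division *)
definition depth :: "nat set \<Rightarrow> nat" where
  "depth G = (conductor G + multiplicity G - 1) div multiplicity G"

definition N2 :: "nat \<Rightarrow> nat" where
  "N2 g = card {G. gapset G \<and> genus G = g \<and> depth G \<le> 2}"

end

theory Submission
  imports Defs "HOL-Number_Theory.Fib"
begin

text \<open>A gapset G of multiplicity m has depth at most 2 exactly when G = {1, ..., m-1} \<union> A
  with A a subset of the open interval (m, 2m): every such set is a gapset, since a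
  decomposition z = x + y with z < 2m forces x < m or y < m. If G has genus g, then A has
  g + 1 - m elements, so there are (m-1) choose (g+1-m) of them, and summing over m gives
  the diagonal sum of Pascal's triangle, which is the Fibonacci number fib (g + 1).\<close>

lemma
  assumes "finite G"
  shows multiplicity_ge_1: "multiplicity G \<ge> 1"
    and multiplicity_notin: "multiplicity G \<notin> G"
    and atLeastLessThan_multiplicity_subset: "{1..<multiplicity G} \<subseteq> G"
proof -
  obtain k where "\<forall>x\<in>G. x < k"
    using assms finite_nat_set_iff_bounded by blast
  then have nongap: "Suc k \<ge> 1 \<and> Suc k \<notin> G"
    by auto
  show "multiplicity G \<ge> 1" "multiplicity G \<notin> G"
    using LeastI[of "\<lambda>m. m \<ge> 1 \<and> m \<notin> G", OF nongap] unfolding multiplicity_def by auto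
  show "{1..<multiplicity G} \<subseteq> G"
  proof
    fix x assume "x \<in> {1..<multiplicity G}"
    then show "x \<in> G"
      using not_less_Least[of x "\<lambda>m. m \<ge> 1 \<and> m \<notin> G"] unfolding multiplicity_def by auto
  qed
qed

lemma multiplicity_eqI:
  assumes "m \<ge> 1" "m \<notin> G" "{1..<m} \<subseteq> G"
  shows "multiplicity G = m"
  unfolding multiplicity_def
proof (rule Least_equality)
  show "m \<ge> 1 \<and> m \<notin> G"
    using assms by simp
  show "m \<le> k" if "k \<ge> 1 \<and> k \<notin> G" for k
    using that assms(3) by (meson atLeastLessThan_iff not_le subsetD)
qed

lemma conductor_le_iff:
  assumes "finite G"
  shows "conductor G \<le> c \<longleftrightarrow> G \<subseteq> {..<c}"
  using assms by (cases "G = {}") (auto simp: conductor_def Suc_le_eq)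

lemma ceiling_div_le_iff:
  fixes c m d :: nat
  assumes "m > 0"
  shows "(c + m - 1) div m \<le> d \<longleftrightarrow> c \<le> d * m"
proof -
  have "(c + m - 1) div m \<le> d \<longleftrightarrow> c + m - 1 < Suc d * m"
    using div_less_iff_less_mult[OF assms, of "c + m - 1" "Suc d"] by linarith
  also have "\<dots> \<longleftrightarrow> c \<le> d * m"
    using assms by auto
  finally show ?thesis .
qed

lemma depth_le_iff:
  assumes "finite G"
  shows "depth G \<le> d \<longleftrightarrow> G \<subseteq> {..<d * multiplicity G}"
  using ceiling_div_le_iff[of "multiplicity G" "conductor G" d] multiplicity_ge_1[OF assms]
  by (simp add: depth_def conductor_le_iff[OF assms])

lemma gapset_if_subset_below_twice:
  assumes "{1..<m} \<subseteq> G" "G \<subseteq> {1..<2*m}"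
  shows "gapset G"
  unfolding gapset_def
proof (intro conjI ballI allI impI)
  show "finite G" "0 \<notin> G"
    using assms(2) finite_subset by auto
  fix z x y
  assume "z \<in> G" and xy: "x \<ge> 1 \<and> y \<ge> 1 \<and> z = x + y"
  then have "x < m \<or> y < m"
    using assms(2) by auto
  then show "x \<in> G \<or> y \<in> G"
    using xy assms(1) by auto
qed

definition depth2_gapsets :: "nat \<Rightarrow> nat \<Rightarrow> nat set set" where
  "depth2_gapsets m g = {G. {1..<m} \<subseteq> G \<and> m \<notin> G \<and> G \<subseteq> {1..<2*m} \<and> card G = g}"

lemma mem_depth2_gapsets_iff:
  assumes "m \<ge> 1"
  shows "G \<in> depth2_gapsets m g \<longleftrightarrow>
    gapset G \<and> depth G \<le> 2 \<and> multiplicity G = m \<and> genus G = g"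
proof
  assume G: "G \<in> depth2_gapsets m g"
  then have "finite G"
    unfolding depth2_gapsets_def using finite_subset by blast
  moreover have "multiplicity G = m"
    using G assms by (intro multiplicity_eqI) (auto simp: depth2_gapsets_def)
  ultimately show "gapset G \<and> depth G \<le> 2 \<and> multiplicity G = m \<and> genus G = g"
    using G gapset_if_subset_below_twice
    by (auto simp: depth2_gapsets_def depth_le_iff genus_def)
next
  assume G: "gapset G \<and> depth G \<le> 2 \<and> multiplicity G = m \<and> genus G = g"
  then have "finite G" "0 \<notin> G"
    unfolding gapset_def by auto
  moreover have "G \<subseteq> {..<2*m}"
    using G depth_le_iff[OF \<open>finite G\<close>, of 2] by metis
  ultimately have "G \<subseteq> {1..<2*m}"
    by (auto simp: subset_eq Suc_le_eq intro!: gr0I)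
  with G \<open>finite G\<close> show "G \<in> depth2_gapsets m g"
    using multiplicity_notin atLeastLessThan_multiplicity_subset
    by (auto simp: depth2_gapsets_def genus_def)
qed

lemma card_depth2_gapsets:
  assumes "m \<ge> 1" "m \<le> g + 1"
  shows "card (depth2_gapsets m g) = (m - 1) choose (g + 1 - m)"
proof -
  let ?tops = "{A. A \<subseteq> {m<..<2*m} \<and> card A = g + 1 - m}"
  have "bij_betw (\<lambda>G. G - {1..<m}) (depth2_gapsets m g) ?tops"
  proof (rule bij_betw_byWitness[where f' = "\<lambda>A. A \<union> {1..<m}"])
    show "\<forall>G\<in>depth2_gapsets m g. G - {1..<m} \<union> {1..<m} = G"
      unfolding depth2_gapsets_def by auto
    show "\<forall>A\<in>?tops. A \<union> {1..<m} - {1..<m} = A"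
      by auto
    show "(\<lambda>G. G - {1..<m}) ` depth2_gapsets m g \<subseteq> ?tops"
    proof clarify
      fix G assume "G \<in> depth2_gapsets m g"
      then have G: "{1..<m} \<subseteq> G" "m \<notin> G" "G \<subseteq> {1..<2*m}" "card G = g"
        unfolding depth2_gapsets_def by auto
      have "G - {1..<m} \<subseteq> {m<..<2*m}"
      proof
        fix x assume "x \<in> G - {1..<m}"
        with G(2,3) show "x \<in> {m<..<2*m}"
          by (cases "x = m") auto
      qed
      moreover have "card (G - {1..<m}) = g + 1 - m"
        using G assms(1) finite_subset by (simp add: card_Diff_subset)
      ultimately show "G - {1..<m} \<subseteq> {m<..<2*m} \<and> card (G - {1..<m}) = g + 1 - m"
        by blast
    qed
    show "(\<lambda>A. A \<union> {1..<m}) ` ?tops \<subseteq> depth2_gapsets m g"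
    proof clarify
      fix A assume A: "A \<subseteq> {m<..<2*m}" "card A = g + 1 - m"
      then have "finite A" "A \<inter> {1..<m} = {}"
        using finite_subset by auto
      then have "card (A \<union> {1..<m}) = g"
        using A assms by (simp add: card_Un_disjoint)
      with A show "A \<union> {1..<m} \<in> depth2_gapsets m g"
        unfolding depth2_gapsets_def by auto
    qed
  qed
  then have "card (depth2_gapsets m g) = card ?tops"
    by (rule bij_betw_same_card)
  also have "\<dots> = (m - 1) choose (g + 1 - m)"
    by (simp add: n_subsets)
  finally show ?thesis .
qed

lemma depth2_gapsets_genus_eq_Union:
  "{G. gapset G \<and> genus G = g \<and> depth G \<le> 2} = (\<Union>m\<in>{1..g+1}. depth2_gapsets m g)"
proof (intro equalityI subsetI)
  fix G assume G: "G \<in> {G. gapset G \<and> genus G = g \<and> depth G \<le> 2}"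
  define m where "m = multiplicity G"
  have "finite G"
    using G unfolding gapset_def by auto
  then have "m \<ge> 1" "card {1..<m} \<le> card G"
    unfolding m_def
    by (fact multiplicity_ge_1, intro card_mono atLeastLessThan_multiplicity_subset)
  with G show "G \<in> (\<Union>m\<in>{1..g+1}. depth2_gapsets m g)"
    by (auto simp: mem_depth2_gapsets_iff m_def genus_def)
qed (auto simp: mem_depth2_gapsets_iff)

lemma N2_eq_fib: "N2 g = fib (Suc g)"
proof -
  have "N2 g = (\<Sum>m\<in>{1..g+1}. card (depth2_gapsets m g))"
    unfolding N2_def depth2_gapsets_genus_eq_Union
  proof (rule card_UN_disjoint)
    show "\<forall>m\<in>{1..g+1}. finite (depth2_gapsets m g)"
      unfolding depth2_gapsets_def by (auto intro: finite_subset[of _ "Pow {1..<2*_}"])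
    show "\<forall>m\<in>{1..g+1}. \<forall>m'\<in>{1..g+1}. m \<noteq> m' \<longrightarrow> depth2_gapsets m g \<inter> depth2_gapsets m' g = {}"
      by (auto simp: mem_depth2_gapsets_iff)
  qed simp
  also have "\<dots> = (\<Sum>m\<in>{1..g+1}. (m - 1) choose (g + 1 - m))"
    by (rule sum.cong) (auto simp: card_depth2_gapsets)
  also have "\<dots> = (\<Sum>k = 0..g. (g - k) choose k)"
    using sum.atLeastLessThan_rev_at_least_Suc_atMost[of "\<lambda>k. (g - k) choose k" 0 "g + 1"]
    by (simp add: atLeastLessThanSuc_atLeastAtMost)
  also have "\<dots> = fib (Suc g)"
    by (rule ne_diagonal_fib)
  finally show ?thesis .
qed

theorem mainTheorem10:
  fixes g :: nat
  assumes "g \<ge> 2"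
  shows "N2 g = N2 (g - 1) + N2 (g - 2)"
proof -
  obtain n where "g = Suc (Suc n)"
    using assms by (metis add_2_eq_Suc le_Suc_ex)
  then show ?thesis
    by (simp add: N2_eq_fib)
qed

end
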